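(* Let $n\geq 1$ be an integer. The set of real neighbours of $\mathcal{E}_n$ is $\{0,\pm1,\pm2\}$ when $n=1$ or $n\geq 5$, and is $\{0,\pm1,\pm2,\pm3\}$ when $n\in\{2,3,4\}$. The set of real neighbours of $T_n$ is $\{0,\pm1\}$.
   Context: Let $b:=-n+i$. $T_n$ is the attractor of the iterated function system $\{z\mapsto b^{-1}(z+d): d\in\{0,1,\ldots,n^2\}\}$, i.e. $T_n=\{\sum_{j\ge1}d_jb^{-j}: d_j\in\{0,\ldots,n^2\}\}$. $\mathcal{E}_n$ is the attractor of $\{z\mapsto b^{-1}(z+\delta): \delta\in\{0,\pm1,\ldots,\pm n^2\}\}$, i.e. $\mathcal{E}_n=\{\sum_{j\ge1}\delta_jb^{-j}: \delta_j\in\{-n^2,\ldots,n^2\}\}$. For $Y\subset\mathbb{C}$, a neighbour of $Y$ is a Gaussian integer $s$ with $Y\cap(Y+s)\neq\emptyset$; a real neighbour is a neighbour that is a real number (an integer). *)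

theory Defs
  imports "HOL-Analysis.Analysis"
begin

definition base :: "nat \<Rightarrow> complex" where
  "base n = - of_nat n + \<i>"

text \<open>Attractor of the IFS z -> b^{-1}(z+d), d in D:
  the set of all sums sum_{j>=1} d_j b^{-j} with digits d_j in D
  (indexed here from 0, so digit k has weight b^{-(k+1)}).\<close>
definition attractor :: "complex \<Rightarrow> int set \<Rightarrow> complex set" where
  "attractor b D = {z. \<exists>d::nat \<Rightarrow> int. (\<forall>k. d k \<in> D) \<and>
                       z = (\<Sum>k. of_int (d k) / b ^ Suc k)}"

definition T_set :: "nat \<Rightarrow> complex set" where
  "T_set n = attractor (base n) {0 .. int (n^2)}"

definition E_set :: "nat \<Rightarrow> complex set" where
  "E_set n = attractor (base n) {- int (n^2) .. int (n^2)}"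

definition gaussian_int :: "complex \<Rightarrow> bool" where
  "gaussian_int s \<longleftrightarrow> Re s \<in> \<int> \<and> Im s \<in> \<int>"

definition neighbour :: "complex set \<Rightarrow> complex \<Rightarrow> bool" where
  "neighbour Y s \<longleftrightarrow> gaussian_int s \<and> Y \<inter> ((\<lambda>y. y + s) ` Y) \<noteq> {}"

definition real_neighbours :: "complex set \<Rightarrow> int set" where
  "real_neighbours Y = {m::int. neighbour Y (of_int m)}"

end

(*
  An integer m is a real neighbour of the attractor with digit set D exactly when m lies in the
  attractor with the difference digit set D - D, that is {-n^2..n^2} for T_n and {-2n^2..2n^2}
  for E_n.  Points of an attractor are the starting points of bounded orbits of z -> b z - e:
  the 3-cycle 1 -> n - 1 + i -> -n - i -> 1 puts 1 (and hence its multiples) into it, and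
  explicit eventually periodic orbits put 3 into it for n = 2, 3, 4.  Conversely, if m lies in
  the attractor then so do b m - e and b (b m - e) - e', whose imaginary parts are m and
  -(2 n m + e); an invariant rectangle (an octagon for n = 1) bounds the imaginary parts on the
  attractor, and these two bounds leave only the stated values of m.
*)
theory Submission
  imports Defs
begin

lemma summable_digit_series:
  fixes b :: complex
  assumes "norm b > 1" and "finite D" and "\<forall>k. d k \<in> D"
  shows "summable (\<lambda>k. of_int (d k) / b ^ Suc k)"
proof (rule summable_comparison_test')
  define M where "M = (\<Sum>e\<in>D. \<bar>real_of_int e\<bar>)"
  show "summable (\<lambda>k. M * inverse (norm b) ^ Suc k)"
    using assms(1) by (intro summable_mult summable_Suc_iff[THEN iffD2] summable_geometric)
      (simp add: inverse_less_1_iff)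
  fix k
  have "\<bar>real_of_int (d k)\<bar> \<le> M"
    unfolding M_def using assms(2,3) by (intro member_le_sum) auto
  then have "norm (of_int (d k) / b ^ Suc k) \<le> M / norm b ^ Suc k"
    by (simp add: norm_divide norm_power divide_right_mono del: power_Suc)
  then show "norm (of_int (d k) / b ^ Suc k) \<le> M * inverse (norm b) ^ Suc k"
    by (simp add: divide_inverse power_inverse del: power_Suc)
qed

lemma digit_series_in_attractor:
  "(\<And>k. d k \<in> D) \<Longrightarrow> (\<Sum>k. of_int (d k) / b ^ Suc k) \<in> attractor b D"
  unfolding attractor_def by blast

lemma bounded_orbit_sums:
  fixes b :: complex
  assumes "norm b > 1" and "bounded (range x)" and "\<And>k. x (Suc k) = b * x k - of_int (d k)"
  shows "(\<lambda>k. of_int (d k) / b ^ Suc k) sums x 0"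
proof -
  have b0: "b \<noteq> 0" using assms(1) by auto
  have partial: "(\<Sum>k<M. of_int (d k) / b ^ Suc k) = x 0 - x M / b ^ M" for M
  proof (induction M)
    case (Suc M)
    have "x M / b ^ M = of_int (d M) / b ^ Suc M + x (Suc M) / b ^ Suc M"
      using assms(3)[of M] b0 by (simp add: field_simps)
    then show ?case using Suc by simp
  qed simp
  obtain C where C: "\<And>k. norm (x k) \<le> C" using assms(2) by (auto simp: bounded_iff)
  have "(\<lambda>M. x M / b ^ M) \<longlonglongrightarrow> 0"
  proof (rule Lim_null_comparison)
    have "norm (x M / b ^ M) \<le> C * inverse (norm b) ^ M" for M
    proof -
      have "norm (x M / b ^ M) = norm (x M) * inverse (norm b) ^ M"
        by (simp add: norm_mult norm_inverse norm_power divide_inverse power_inverse)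
      then show ?thesis using C[of M] by (simp add: mult_right_mono)
    qed
    then show "\<forall>\<^sub>F M in sequentially. norm (x M / b ^ M) \<le> C * inverse (norm b) ^ M"
      by simp
    show "(\<lambda>M. C * inverse (norm b) ^ M) \<longlonglongrightarrow> 0"
      using assms(1) by (intro tendsto_mult_right_zero LIMSEQ_power_zero)
        (simp add: inverse_less_1_iff)
  qed
  then have "(\<lambda>M. x 0 - x M / b ^ M) \<longlonglongrightarrow> x 0 - 0"
    by (intro tendsto_diff tendsto_const)
  then show ?thesis unfolding sums_def partial by simp
qed

lemma bounded_orbit_in_attractor:
  fixes b :: complex
  assumes "norm b > 1" and "bounded (range x)" and "\<And>k. x (Suc k) = b * x k - of_int (d k)"
    and "\<And>k. d k \<in> D"
  shows "x 0 \<in> attractor b D"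
proof -
  have "x 0 = (\<Sum>k. of_int (d k) / b ^ Suc k)"
    using bounded_orbit_sums[of b x d] assms(1-3) by (simp add: sums_unique)
  then show ?thesis using digit_series_in_attractor[of d D b] assms(4) by simp
qed

lemma bounded_subinvariant_subset_attractor:
  fixes b :: complex
  assumes "norm b > 1" and "bounded S" and "\<And>z. z \<in> S \<Longrightarrow> \<exists>e\<in>D. b * z - of_int e \<in> S"
  shows "S \<subseteq> attractor b D"
proof
  fix z assume "z \<in> S"
  obtain e where e: "\<And>w. w \<in> S \<Longrightarrow> e w \<in> D \<and> b * w - of_int (e w) \<in> S"
    using assms(3) by metis
  define x where "x = rec_nat z (\<lambda>_ w. b * w - of_int (e w))"
  have x_in: "x k \<in> S" for k
    by (induction k) (simp_all add: x_def \<open>z \<in> S\<close> e)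
  have "x 0 \<in> attractor b D"
  proof (rule bounded_orbit_in_attractor[OF assms(1)])
    show "bounded (range x)" using x_in assms(2) by (blast intro: bounded_subset)
    show "x (Suc k) = b * x k - of_int (e (x k))" for k by (simp add: x_def)
    show "e (x k) \<in> D" for k using x_in e by blast
  qed
  then show "z \<in> attractor b D" by (simp add: x_def)
qed

lemma attractor_mono: "D \<subseteq> D' \<Longrightarrow> attractor b D \<subseteq> attractor b D'"
  unfolding attractor_def by fastforce

lemma attractor_subset_closed_invariant:
  fixes b :: complex
  assumes "norm b > 1" and "finite D" and "closed B" and "0 \<in> B"
    and "\<And>z e. z \<in> B \<Longrightarrow> e \<in> D \<Longrightarrow> (z + of_int e) / b \<in> B"
  shows "attractor b D \<subseteq> B"
proof
  fix z assume "z \<in> attractor b D"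
  then obtain d where d: "\<forall>k. d k \<in> D" and z: "z = (\<Sum>k. of_int (d k) / b ^ Suc k)"
    unfolding attractor_def by blast
  have partial_in: "(\<Sum>k<N. of_int (d k) / b ^ Suc k) \<in> B" if "\<forall>k. d k \<in> D" for N d
    using that
  proof (induction N arbitrary: d)
    case (Suc N)
    have "(\<Sum>k<Suc N. of_int (d k) / b ^ Suc k) =
          ((\<Sum>k<N. of_int (d (Suc k)) / b ^ Suc k) + of_int (d 0)) / b"
      unfolding sum.lessThan_Suc_shift
      by (simp add: sum_divide_distrib add_divide_distrib mult.commute mult.left_commute)
    also have "\<dots> \<in> B"
      using Suc.prems by (intro assms(5) Suc.IH) auto
    finally show ?case .
  qed (simp add: assms(4))
  have "(\<lambda>N. \<Sum>k<N. of_int (d k) / b ^ Suc k) \<longlonglongrightarrow> z"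
    unfolding z by (intro summable_LIMSEQ summable_digit_series[OF assms(1,2) d])
  then show "z \<in> B"
    by (rule closed_sequentially[OF assms(3), rotated]) (use partial_in[OF d] in simp)
qed

lemma attractor_shift:
  fixes b :: complex
  assumes "norm b > 1" and "finite D" and "z \<in> attractor b D"
  shows "\<exists>e\<in>D. b * z - of_int e \<in> attractor b D"
proof -
  obtain d where d: "\<forall>k. d k \<in> D" and z: "z = (\<Sum>k. of_int (d k) / b ^ Suc k)"
    using assms(3) unfolding attractor_def by blast
  have b0: "b \<noteq> 0" using assms(1) by auto
  let ?f = "\<lambda>k. of_int (d k) / b ^ Suc k"
  have summable: "summable ?f"
    using summable_digit_series[OF assms(1,2) d] .
  have "b * ?f (Suc k) = of_int (d (Suc k)) / b ^ Suc k" for k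
    using b0 by (simp add: field_simps)
  then have "(\<Sum>k. of_int (d (Suc k)) / b ^ Suc k) = (\<Sum>k. b * ?f (Suc k))"
    by presburger
  also have "\<dots> = b * (z - ?f 0)"
    unfolding z suminf_split_head[OF summable, symmetric]
    by (rule suminf_mult) (subst summable_Suc_iff, rule summable)
  also have "\<dots> = b * z - of_int (d 0)"
    using b0 by (simp add: field_simps)
  finally have "b * z - of_int (d 0) \<in> attractor b D"
    using digit_series_in_attractor[of "\<lambda>k. d (Suc k)" D b] d by simp
  then show ?thesis using d by blast
qed

lemma attractor_scale:
  fixes b :: complex
  assumes "norm b > 1" and "finite D" and "z \<in> attractor b D"
  shows "of_int c * z \<in> attractor b ((*) c ` D)"
proof -
  obtain d where d: "\<forall>k. d k \<in> D" and z: "z = (\<Sum>k. of_int (d k) / b ^ Suc k)"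
    using assms(3) unfolding attractor_def by blast
  have "of_int c * z = (\<Sum>k. of_int c * (of_int (d k) / b ^ Suc k))"
    unfolding z by (rule suminf_mult[symmetric]) (rule summable_digit_series[OF assms(1,2) d])
  also have "\<dots> = (\<Sum>k. of_int (c * d k) / b ^ Suc k)"
    by simp
  also have "\<dots> \<in> attractor b ((*) c ` D)"
    by (rule digit_series_in_attractor) (use d in blast)
  finally show ?thesis .
qed

lemma attractor_differences:
  fixes b :: complex
  assumes "norm b > 1" and "finite D"
  shows "{y - z |y z. y \<in> attractor b D \<and> z \<in> attractor b D}
           = attractor b {a - c |a c. a \<in> D \<and> c \<in> D}"
proof (intro equalityI subsetI)
  fix w assume "w \<in> {y - z |y z. y \<in> attractor b D \<and> z \<in> attractor b D}"
  then obtain d d' where d: "\<forall>k. d k \<in> D" and d': "\<forall>k. d' k \<in> D"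
    and w: "w = (\<Sum>k. of_int (d k) / b ^ Suc k) - (\<Sum>k. of_int (d' k) / b ^ Suc k)"
    unfolding attractor_def by blast
  have "w = (\<Sum>k. of_int (d k) / b ^ Suc k - of_int (d' k) / b ^ Suc k)"
    unfolding w by (intro suminf_diff summable_digit_series[OF assms] d d')
  then have "w = (\<Sum>k. of_int (d k - d' k) / b ^ Suc k)"
    by (simp add: diff_divide_distrib)
  then show "w \<in> attractor b {a - c |a c. a \<in> D \<and> c \<in> D}"
    using digit_series_in_attractor[of "\<lambda>k. d k - d' k" "{a - c |a c. a \<in> D \<and> c \<in> D}" b]
      d d' by blast
next
  fix w assume "w \<in> attractor b {a - c |a c. a \<in> D \<and> c \<in> D}"
  then obtain d where d: "\<forall>k. d k \<in> {a - c |a c. a \<in> D \<and> c \<in> D}"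
    and w: "w = (\<Sum>k. of_int (d k) / b ^ Suc k)"
    unfolding attractor_def by blast
  from d have "\<forall>k. \<exists>a c. d k = a - c \<and> a \<in> D \<and> c \<in> D"
    by blast
  then obtain a where "\<forall>k. \<exists>c. d k = a k - c \<and> a k \<in> D \<and> c \<in> D"
    by metis
  then obtain c where ac: "\<forall>k. d k = a k - c k \<and> a k \<in> D \<and> c k \<in> D"
    by metis
  have "(\<Sum>k. of_int (a k) / b ^ Suc k) - (\<Sum>k. of_int (c k) / b ^ Suc k)
          = (\<Sum>k. of_int (a k) / b ^ Suc k - of_int (c k) / b ^ Suc k)"
    using ac by (intro suminf_diff summable_digit_series[OF assms]) auto
  then have "w = (\<Sum>k. of_int (a k) / b ^ Suc k) - (\<Sum>k. of_int (c k) / b ^ Suc k)"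
    unfolding w using ac by (simp add: diff_divide_distrib)
  moreover have "(\<Sum>k. of_int (a k) / b ^ Suc k) \<in> attractor b D"
    and "(\<Sum>k. of_int (c k) / b ^ Suc k) \<in> attractor b D"
    by (rule digit_series_in_attractor, use ac in blast)+
  ultimately show "w \<in> {y - z |y z. y \<in> attractor b D \<and> z \<in> attractor b D}"
    by blast
qed

lemma real_neighbours_attractor:
  fixes b :: complex
  assumes "norm b > 1" and "finite D"
  shows "real_neighbours (attractor b D)
           = {m. of_int m \<in> attractor b {a - c |a c. a \<in> D \<and> c \<in> D}}"
proof -
  have "neighbour (attractor b D) (of_int m) \<longleftrightarrow>
          of_int m \<in> {y - z |y z. y \<in> attractor b D \<and> z \<in> attractor b D}" for m
    by (force simp: neighbour_def gaussian_int_def)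
  then show ?thesis
    unfolding real_neighbours_def attractor_differences[OF assms] by blast
qed

lemma int_interval_differences:
  fixes l u :: int
  assumes "l \<le> u"
  shows "{a - c |a c. a \<in> {l..u} \<and> c \<in> {l..u}} = {-(u - l)..u - l}"
proof (intro equalityI subsetI)
  fix e :: int assume e: "e \<in> {-(u - l)..u - l}"
  show "e \<in> {a - c |a c. a \<in> {l..u} \<and> c \<in> {l..u}}"
  proof (cases "e \<ge> 0")
    case True
    then show ?thesis using e by (intro CollectI exI[of _ "l + e"] exI[of _ l]) auto
  next
    case False
    then show ?thesis using e by (intro CollectI exI[of _ l] exI[of _ "l - e"]) auto
  qed
qed auto

lemma norm_base_gt_1: "n \<ge> 1 \<Longrightarrow> norm (base n) > 1"
  by (simp add: base_def cmod_def)

lemma Re_divide_base: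
  "Re (w / base n) = (Im w - real n * Re w) / (real n ^ 2 + 1)"
  by (simp add: base_def Re_divide power2_eq_square)

lemma Im_divide_base:
  "Im (w / base n) = (- Re w - real n * Im w) / (real n ^ 2 + 1)"
  by (simp add: base_def Im_divide power2_eq_square algebra_simps)

lemma attractor_base_subset_rectangle:
  fixes N :: int and a c :: real
  assumes "n \<ge> 1" and "a \<ge> 0" and "c \<ge> 0"
    and Im_cond: "a + N + real n * c \<le> c * (real n ^ 2 + 1)"
    and Re_cond: "c + real n * (a + N) \<le> a * (real n ^ 2 + 1)"
  shows "attractor (base n) {-N..N} \<subseteq> {z. \<bar>Re z\<bar> \<le> a \<and> \<bar>Im z\<bar> \<le> c}"
proof (rule attractor_subset_closed_invariant[OF norm_base_gt_1[OF assms(1)]])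
  show "closed {z. \<bar>Re z\<bar> \<le> a \<and> \<bar>Im z\<bar> \<le> c}"
    by (intro closed_Collect_conj closed_Collect_le continuous_intros)
  fix w e assume w: "w \<in> {z. \<bar>Re z\<bar> \<le> a \<and> \<bar>Im z\<bar> \<le> c}" and e: "e \<in> {-N..N}"
  define p q where "p = Re w + of_int e" and "q = Im w"
  have p: "\<bar>p\<bar> \<le> a + N" and q: "\<bar>q\<bar> \<le> c"
    using w e by (auto simp: p_def q_def)
  have "\<bar>q - real n * p\<bar> \<le> \<bar>q\<bar> + real n * \<bar>p\<bar>"
    using abs_triangle_ineq4[of q "real n * p"] by (simp add: abs_mult)
  then have "\<bar>q - real n * p\<bar> \<le> a * (real n ^ 2 + 1)"
    using Re_cond mult_left_mono[OF p, of "real n"] q by linarith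
  moreover have "\<bar>- p - real n * q\<bar> \<le> \<bar>p\<bar> + real n * \<bar>q\<bar>"
    using abs_triangle_ineq4[of "- p" "real n * q"] by (simp add: abs_mult)
  then have "\<bar>- p - real n * q\<bar> \<le> c * (real n ^ 2 + 1)"
    using Im_cond mult_left_mono[OF q, of "real n"] p by linarith
  moreover have "real n ^ 2 + 1 > 0"
    by (rule add_nonneg_pos) simp_all
  ultimately show "(w + of_int e) / base n \<in> {z. \<bar>Re z\<bar> \<le> a \<and> \<bar>Im z\<bar> \<le> c}"
    by (simp add: Re_divide_base Im_divide_base p_def q_def pos_divide_le_eq)
qed (use assms(2,3) in auto)

lemma Im_attractor_base_le:
  fixes N :: int
  assumes "n \<ge> 2" and "N \<ge> 0" and "z \<in> attractor (base n) {-N..N}"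
  shows "\<bar>Im z\<bar> \<le> N * (real n ^ 2 + 1) / ((real n ^ 2 - real n + 1) ^ 2 - 1)"
proof -
  define D where "D = real n ^ 2 - real n + 1"
  have "real n * (real n - 1) \<ge> 2 * 1"
    using assms(1) by (intro mult_mono) auto
  then have "D \<ge> 3"
    unfolding D_def by (simp add: power2_eq_square algebra_simps)
  then have "D ^ 2 \<ge> 3 ^ 2"
    by (intro power_mono) auto
  then have pos: "D ^ 2 - 1 > 0"
    by simp
  have n_sq: "real n ^ 2 + 1 = D + real n"
    unfolding D_def by simp
  define t where "t = N / (D ^ 2 - 1)"
  have N: "real_of_int N = t * (D ^ 2 - 1)"
    using pos by (simp add: t_def)
  \<comment> \<open>These half-widths turn both conditions on the rectangle into equalities.\<close>
  define a c where "a = t * (real n * D + 1)" and "c = t * (D + real n)"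
  have "a + N + real n * c = c * (D + real n)"
    by (simp add: a_def c_def N algebra_simps power2_eq_square)
  moreover have "c + real n * (a + N) = a * (D + real n)"
    by (simp add: a_def c_def N algebra_simps power2_eq_square)
  moreover have "a \<ge> 0" "c \<ge> 0"
    using pos assms(2) \<open>D \<ge> 3\<close> unfolding a_def c_def t_def by simp_all
  ultimately have "attractor (base n) {-N..N} \<subseteq> {z. \<bar>Re z\<bar> \<le> a \<and> \<bar>Im z\<bar> \<le> c}"
    using assms(1) by (intro attractor_base_subset_rectangle) (auto simp: n_sq)
  then show ?thesis
    using assms(3) unfolding c_def t_def n_sq by (auto simp: D_def)
qed

lemma Im_attractor_base_1_le:
  fixes N :: int
  assumes "N \<ge> 0" and "z \<in> attractor (base 1) {-N..N}"
  shows "\<bar>Im z\<bar> \<le> 5 * N / 3"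
proof -
  \<comment> \<open>No rectangle is invariant for n = 1 (its conditions would force a + N \<le> c and
    c + N \<le> a), but this octagon is.\<close>
  let ?O = "{z. \<bar>Re z\<bar> \<le> 4 * N / 3 \<and> \<bar>Im z\<bar> \<le> 5 * N / 3 \<and>
                \<bar>Re z + Im z\<bar> \<le> 7 * N / 3 \<and> \<bar>Re z - Im z\<bar> \<le> 5 * N / 3}"
  have "attractor (base 1) {-N..N} \<subseteq> ?O"
  proof (rule attractor_subset_closed_invariant[OF norm_base_gt_1])
    show "closed ?O"
      by (intro closed_Collect_conj closed_Collect_le continuous_intros)
    fix w e assume "w \<in> ?O" and "e \<in> {-N..N}"
    then show "(w + of_int e) / base 1 \<in> ?O"
      unfolding mem_Collect_eq abs_le_iff atLeastAtMost_iff Re_divide_base Im_divide_base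
      by (simp add: field_simps)
  qed (use assms(1) in auto)
  then show ?thesis
    using assms(2) by auto
qed

lemma Im_bound_factor_lt_2:
  assumes "n \<ge> 3"
  shows "real n ^ 2 * (real n ^ 2 + 1) / ((real n ^ 2 - real n + 1) ^ 2 - 1) < 2"
proof -
  obtain k where n: "real n = k + 3" and "k \<ge> 0"
    using assms by (intro that[of "real n - 3"]) auto
  define X Y where "X = real n ^ 2 * (real n ^ 2 + 1)" and "Y = (real n ^ 2 - real n + 1) ^ 2 - 1"
  have "2 * Y - X = k ^ 4 + 8 * k ^ 3 + 23 * k ^ 2 + 26 * k + 6"
    unfolding X_def Y_def n
    by (simp add: power2_eq_square power3_eq_cube power4_eq_xxxx algebra_simps)
  moreover have "k ^ 4 + 8 * k ^ 3 + 23 * k ^ 2 + 26 * k + 6 > 0"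
    using \<open>k \<ge> 0\<close> zero_le_power[of k 4] zero_le_power[of k 3] zero_le_power[of k 2]
    by linarith
  moreover have "X \<ge> 0"
    unfolding X_def by simp
  ultimately have "Y > 0" and "X < 2 * Y"
    by linarith+
  then show ?thesis
    unfolding X_def Y_def by (simp add: pos_divide_less_eq)
qed

lemma Im_bound_factor_lt_3_halves:
  assumes "n \<ge> 5"
  shows "real n ^ 2 * (real n ^ 2 + 1) / ((real n ^ 2 - real n + 1) ^ 2 - 1) < 3 / 2"
proof -
  obtain k where n: "real n = k + 5" and "k \<ge> 0"
    using assms by (intro that[of "real n - 5"]) auto
  define X Y where "X = real n ^ 2 * (real n ^ 2 + 1)" and "Y = (real n ^ 2 - real n + 1) ^ 2 - 1"
  have "3 * Y - 2 * X = k ^ 4 + 14 * k ^ 3 + 67 * k ^ 2 + 114 * k + 20"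
    unfolding X_def Y_def n
    by (simp add: power2_eq_square power3_eq_cube power4_eq_xxxx algebra_simps)
  moreover have "k ^ 4 + 14 * k ^ 3 + 67 * k ^ 2 + 114 * k + 20 > 0"
    using \<open>k \<ge> 0\<close> zero_le_power[of k 4] zero_le_power[of k 3] zero_le_power[of k 2]
    by linarith
  moreover have "X \<ge> 0"
    unfolding X_def by simp
  ultimately have "Y > 0" and "X < 3 / 2 * Y"
    by linarith+
  then show ?thesis
    unfolding X_def Y_def by (simp add: pos_divide_less_eq)
qed

lemma of_int_mem_attractor_base_abs_bounds:
  fixes m N :: int and \<beta> :: real
  assumes "n \<ge> 1" and "of_int m \<in> attractor (base n) {-N..N}"
    and Im_le: "\<And>z. z \<in> attractor (base n) {-N..N} \<Longrightarrow> \<bar>Im z\<bar> \<le> \<beta>"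
  shows "\<bar>of_int m\<bar> \<le> \<beta>" and "2 * real n * \<bar>m\<bar> \<le> \<beta> + N"
proof -
  have nb: "norm (base n) > 1"
    using norm_base_gt_1[OF assms(1)] .
  obtain e where e: "e \<in> {-N..N}" and z1: "base n * of_int m - of_int e \<in> attractor (base n) {-N..N}"
    using attractor_shift[OF nb _ assms(2)] by auto
  obtain e' where z2: "base n * (base n * of_int m - of_int e) - of_int e' \<in> attractor (base n) {-N..N}"
    using attractor_shift[OF nb _ z1] by auto
  have Im1: "Im (base n * of_int m - of_int e) = m"
    by (simp add: base_def)
  show "\<bar>of_int m\<bar> \<le> \<beta>"
    using Im_le[OF z1] unfolding Im1 .
  have Im2: "Im (base n * (base n * of_int m - of_int e) - of_int e') = - (2 * real n * m + e)"
    by (simp add: base_def algebra_simps)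
  have "\<bar>2 * real n * m + e\<bar> \<le> \<beta>"
    using Im_le[OF z2] unfolding Im2 by simp
  moreover have "2 * real n * \<bar>m\<bar> \<le> \<bar>2 * real n * m + e\<bar> + \<bar>e\<bar>"
    using abs_triangle_ineq4[of "2 * real n * m + e" e] by (simp add: abs_mult)
  moreover have "\<bar>real_of_int e\<bar> \<le> N"
    using e by auto
  ultimately show "2 * real n * \<bar>m\<bar> \<le> \<beta> + N"
    by simp
qed

lemma one_mem_attractor_base:
  assumes "n \<ge> 1"
  shows "1 \<in> attractor (base n) {-int (n^2)..int (n^2)}"
proof -
  let ?S = "{1, of_nat n - 1 + \<i>, - of_nat n - \<i>}"
  have "0 \<le> (int n - 1) * (int n - 1)"
    by simp
  then have "2 * int n - 1 \<le> int (n^2)" and "(int n - 1) ^ 2 \<le> int (n^2)"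
    using assms by (simp_all add: power2_eq_square algebra_simps)
  moreover have "x \<in> {-int (n^2)..int (n^2)}" if "\<bar>x\<bar> \<le> int (n^2)" for x
    using that by auto
  ultimately have digits: "-(2 * int n - 1) \<in> {-int (n^2)..int (n^2)}"
    "-((int n - 1) ^ 2) \<in> {-int (n^2)..int (n^2)}" "int (n^2) \<in> {-int (n^2)..int (n^2)}"
    using assms by simp_all
  have "?S \<subseteq> attractor (base n) {-int (n^2)..int (n^2)}"
  proof (rule bounded_subinvariant_subset_attractor[OF norm_base_gt_1[OF assms]])
    have "base n * 1 - of_int (-(2 * int n - 1)) = of_nat n - 1 + \<i>"
      and "base n * (of_nat n - 1 + \<i>) - of_int (-((int n - 1) ^ 2)) = - of_nat n - \<i>"
      and "base n * (- of_nat n - \<i>) - of_int (int (n^2)) = 1"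
      by (simp_all add: base_def complex_eq_iff power2_eq_square algebra_simps)
    then show "\<exists>e\<in>{-int (n^2)..int (n^2)}. base n * z - of_int e \<in> ?S" if "z \<in> ?S" for z
      using that digits by blast
  qed simp
  then show ?thesis
    by simp
qed

lemma of_int_mem_attractor_base:
  fixes m k :: int
  assumes "n \<ge> 1" and "\<bar>m\<bar> \<le> k"
  shows "of_int m \<in> attractor (base n) {-(k * int (n^2))..k * int (n^2)}"
proof -
  have "of_int m * 1 \<in> attractor (base n) ((*) m ` {-int (n^2)..int (n^2)})"
    by (rule attractor_scale[OF norm_base_gt_1[OF assms(1)] _ one_mem_attractor_base[OF assms(1)]])
      simp
  moreover have "(*) m ` {-int (n^2)..int (n^2)} \<subseteq> {-(k * int (n^2))..k * int (n^2)}"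
  proof
    fix x assume "x \<in> (*) m ` {-int (n^2)..int (n^2)}"
    then obtain e where x: "x = m * e" and "e \<in> {-int (n^2)..int (n^2)}"
      by blast
    then have "\<bar>x\<bar> \<le> k * int (n^2)"
      unfolding x abs_mult using assms(2) by (intro mult_mono) auto
    then show "x \<in> {-(k * int (n^2))..k * int (n^2)}"
      by (simp add: abs_le_iff)
  qed
  ultimately show ?thesis
    using attractor_mono by (metis mult.right_neutral subsetD)
qed

lemma three_mem_attractor_base_2: "3 \<in> attractor (base 2) {-8..8}"
proof -
  let ?S = "{3, 2 + 3 * \<i>, - 4 - 4 * \<i>, 4 + 4 * \<i>}"
  have "norm (base 2) > 1"
    by (rule norm_base_gt_1) simp
  then have "?S \<subseteq> attractor (base 2) {-8..8}"
  proof (rule bounded_subinvariant_subset_attractor)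
    have "base 2 * 3 - of_int (-8) = 2 + 3 * \<i>"
      and "base 2 * (2 + 3 * \<i>) - of_int (-3) = - 4 - 4 * \<i>"
      and "base 2 * (- 4 - 4 * \<i>) - of_int 8 = 4 + 4 * \<i>"
      and "base 2 * (4 + 4 * \<i>) - of_int (-8) = - 4 - 4 * \<i>"
      by (simp_all add: base_def complex_eq_iff)
    moreover have "{-8, -3, 8} \<subseteq> {-8..8::int}"
      by auto
    ultimately show "\<exists>e\<in>{-8..8}. base 2 * z - of_int e \<in> ?S" if "z \<in> ?S" for z
      using that by blast
  qed simp
  then show ?thesis
    by simp
qed

lemma three_mem_attractor_base_3_4:
  assumes "n \<in> {3, 4}"
  shows "3 \<in> attractor (base n) {-(2 * int (n^2))..2 * int (n^2)}"
proof -
  let ?w = "3 * (of_nat n - 1 + \<i>)"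
  have "norm (base n) > 1"
    using assms by (intro norm_base_gt_1) auto
  then have "{3, ?w, - ?w} \<subseteq> attractor (base n) {-(2 * int (n^2))..2 * int (n^2)}"
  proof (rule bounded_subinvariant_subset_attractor)
    have "base n * 3 - of_int (- 3 * (2 * int n - 1)) = ?w"
      and "base n * ?w - of_int (- 3 * (int n ^ 2 - 2 * int n + 2)) = - ?w"
      and "base n * (- ?w) - of_int (3 * (int n ^ 2 - 2 * int n + 2)) = ?w"
      by (simp_all add: base_def complex_eq_iff power2_eq_square algebra_simps)
    moreover have "{- 3 * (2 * int n - 1), - 3 * (int n ^ 2 - 2 * int n + 2),
                     3 * (int n ^ 2 - 2 * int n + 2)} \<subseteq> {-(2 * int (n^2))..2 * int (n^2)}"
      using assms by auto
    ultimately show "\<exists>e\<in>{-(2 * int (n^2))..2 * int (n^2)}. base n * z - of_int e \<in> {3, ?w, - ?w}"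
      if "z \<in> {3, ?w, - ?w}" for z
      using that by blast
  qed simp
  then show ?thesis
    by simp
qed

lemma three_mem_attractor_base:
  assumes "n \<in> {2, 3, 4}"
  shows "3 \<in> attractor (base n) {-(2 * int (n^2))..2 * int (n^2)}"
  using assms three_mem_attractor_base_2 three_mem_attractor_base_3_4[of n] by auto

lemma real_neighbours_T_set_eq:
  assumes "n \<ge> 1"
  shows "real_neighbours (T_set n) = {m. of_int m \<in> attractor (base n) {-int (n^2)..int (n^2)}}"
proof -
  have "{a - c |a c. a \<in> {0..int (n^2)} \<and> c \<in> {0..int (n^2)}} = {-int (n^2)..int (n^2)}"
    by (subst int_interval_differences) simp_all
  then show ?thesis
    unfolding T_set_def real_neighbours_attractor[OF norm_base_gt_1[OF assms] finite_atLeastAtMost_int]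
    by (simp only:)
qed

lemma real_neighbours_E_set_eq:
  assumes "n \<ge> 1"
  shows "real_neighbours (E_set n)
           = {m. of_int m \<in> attractor (base n) {-(2 * int (n^2))..2 * int (n^2)}}"
proof -
  have "{a - c |a c. a \<in> {-int (n^2)..int (n^2)} \<and> c \<in> {-int (n^2)..int (n^2)}}
          = {-(2 * int (n^2))..2 * int (n^2)}"
    by (subst int_interval_differences) simp_all
  then show ?thesis
    unfolding E_set_def real_neighbours_attractor[OF norm_base_gt_1[OF assms] finite_atLeastAtMost_int]
    by (simp only:)
qed

lemma Im_attractor_base_sq_le:
  fixes k :: int
  assumes "n \<ge> 2" and "k \<ge> 0" and "z \<in> attractor (base n) {-(k * int (n^2))..k * int (n^2)}"
  shows "\<bar>Im z\<bar> \<le> k * (real n ^ 2 * (real n ^ 2 + 1) / ((real n ^ 2 - real n + 1) ^ 2 - 1))"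
  using Im_attractor_base_le[OF assms(1) _ assms(3)] assms(2) by (simp add: mult.assoc)

lemma abs_le_1_if_of_int_mem_attractor_base:
  fixes m :: int
  assumes "n \<ge> 1" and "of_int m \<in> attractor (base n) {-int (n^2)..int (n^2)}"
  shows "\<bar>m\<bar> \<le> 1"
proof -
  consider "n = 1" | "n = 2" | "n \<ge> 3"
    using assms(1) by linarith
  then have "\<bar>of_int m\<bar> < (2 :: real)"
  proof cases
    case 1
    have "\<bar>of_int m\<bar> \<le> (5 / 3 :: real)"
      by (rule of_int_mem_attractor_base_abs_bounds(1)[OF assms])
        (use Im_attractor_base_1_le[of 1] 1 in simp)
    then show ?thesis
      by simp
  next
    case 2
    have "\<bar>of_int m\<bar> \<le> (5 / 2 :: real)" and "2 * real n * \<bar>m\<bar> \<le> 5 / 2 + int (n^2)"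
      by (rule of_int_mem_attractor_base_abs_bounds[OF assms];
          use Im_attractor_base_sq_le[of n 1] 2 in simp)+
    then show ?thesis
      using 2 by simp
  next
    case 3
    have "\<bar>of_int m\<bar> \<le> real n ^ 2 * (real n ^ 2 + 1) / ((real n ^ 2 - real n + 1) ^ 2 - 1)"
      by (rule of_int_mem_attractor_base_abs_bounds(1)[OF assms])
        (use Im_attractor_base_sq_le[of n 1] 3 in simp)
    then show ?thesis
      using Im_bound_factor_lt_2[OF 3] by linarith
  qed
  then show ?thesis
    by simp
qed

lemma abs_le_if_of_int_mem_attractor_base_double:
  fixes m :: int
  assumes "n \<ge> 1" and "of_int m \<in> attractor (base n) {-(2 * int (n^2))..2 * int (n^2)}"
  shows "\<bar>m\<bar> \<le> (if n \<in> {2, 3, 4} then 3 else 2)"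
proof -
  consider "n = 1" | "n = 2" | "n \<ge> 3"
    using assms(1) by linarith
  then have "\<bar>of_int m\<bar> < (if n \<in> {2, 3, 4} then 4 else 3 :: real)"
  proof cases
    case 1
    have "\<bar>of_int m\<bar> \<le> (10 / 3 :: real)" and "2 * real n * \<bar>m\<bar> \<le> 10 / 3 + 2 * int (n^2)"
      by (rule of_int_mem_attractor_base_abs_bounds[OF assms];
          use Im_attractor_base_1_le[of 2] 1 in simp)+
    then show ?thesis
      using 1 by simp
  next
    case 2
    have "\<bar>of_int m\<bar> \<le> (5 :: real)" and "2 * real n * \<bar>m\<bar> \<le> (5 :: real) + of_int (2 * int (n^2))"
      by (rule of_int_mem_attractor_base_abs_bounds[OF assms];
          use Im_attractor_base_sq_le[of n 2] 2 in simp)+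
    then show ?thesis
      using 2 by simp
  next
    case 3
    have bound: "\<bar>of_int m\<bar> \<le> 2 * (real n ^ 2 * (real n ^ 2 + 1) / ((real n ^ 2 - real n + 1) ^ 2 - 1))"
      by (rule of_int_mem_attractor_base_abs_bounds(1)[OF assms])
        (use Im_attractor_base_sq_le[of n 2] 3 in simp)
    then have "\<bar>of_int m\<bar> < (4 :: real)"
      using Im_bound_factor_lt_2[OF 3] by linarith
    moreover have "\<bar>of_int m\<bar> < (3 :: real)" if "n \<ge> 5"
      using bound Im_bound_factor_lt_3_halves[OF that] by linarith
    ultimately show ?thesis
      using 3 by auto
  qed
  then show ?thesis
    by (auto simp flip: of_int_abs split: if_splits)
qed

lemma of_int_mem_attractor_base_double_if_abs_le_3:
  fixes m :: int
  assumes "n \<in> {2, 3, 4}" and "\<bar>m\<bar> \<le> 3"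
  shows "of_int m \<in> attractor (base n) {-(2 * int (n^2))..2 * int (n^2)}"
proof -
  have n: "n \<ge> 1"
    using assms(1) by auto
  consider "\<bar>m\<bar> \<le> 2" | "m = 3" | "m = -3"
    using assms(2) by linarith
  then show ?thesis
  proof cases
    case 1
    then show ?thesis
      using of_int_mem_attractor_base[OF n] by blast
  next
    case 2
    then show ?thesis
      using three_mem_attractor_base[OF assms(1)] by simp
  next
    case 3
    have "of_int (-1) * 3 \<in> attractor (base n) ((*) (-1) ` {-(2 * int (n^2))..2 * int (n^2)})"
      by (rule attractor_scale[OF norm_base_gt_1[OF n] _ three_mem_attractor_base[OF assms(1)]]) simp
    moreover have "(*) (-1) ` {-(2 * int (n^2))..2 * int (n^2)} \<subseteq> {-(2 * int (n^2))..2 * int (n^2)}"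
      by auto
    ultimately have "of_int (-1) * 3 \<in> attractor (base n) {-(2 * int (n^2))..2 * int (n^2)}"
      by (meson attractor_mono subsetD)
    then show ?thesis
      using 3 by simp
  qed
qed

lemma real_neighbours_T_set:
  assumes "n \<ge> 1"
  shows "real_neighbours (T_set n) = {-1..1}"
proof -
  have "of_int m \<in> attractor (base n) {-int (n^2)..int (n^2)} \<longleftrightarrow> \<bar>m\<bar> \<le> 1" for m
    using abs_le_1_if_of_int_mem_attractor_base[OF assms, of m] of_int_mem_attractor_base[OF assms, of m 1]
    by auto
  then show ?thesis
    unfolding real_neighbours_T_set_eq[OF assms] by fastforce
qed

lemma real_neighbours_E_set_2_3_4:
  assumes "n \<in> {2, 3, 4}"
  shows "real_neighbours (E_set n) = {-3..3}"
proof -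
  have n: "n \<ge> 1"
    using assms by auto
  have "of_int m \<in> attractor (base n) {-(2 * int (n^2))..2 * int (n^2)} \<longleftrightarrow> \<bar>m\<bar> \<le> 3" for m
    using abs_le_if_of_int_mem_attractor_base_double[OF n, of m] of_int_mem_attractor_base_double_if_abs_le_3[OF assms, of m]
      assms by auto
  then show ?thesis
    unfolding real_neighbours_E_set_eq[OF n] by fastforce
qed

lemma real_neighbours_E_set:
  assumes "n = 1 \<or> n \<ge> 5"
  shows "real_neighbours (E_set n) = {-2..2}"
proof -
  have n: "n \<ge> 1"
    using assms by auto
  have "of_int m \<in> attractor (base n) {-(2 * int (n^2))..2 * int (n^2)} \<longleftrightarrow> \<bar>m\<bar> \<le> 2" for m
    using abs_le_if_of_int_mem_attractor_base_double[OF n, of m] of_int_mem_attractor_base[OF n, of m 2]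
      assms by auto
  then show ?thesis
    unfolding real_neighbours_E_set_eq[OF n] by fastforce
qed

theorem corollary3p4:
  fixes n :: nat
  assumes "n \<ge> 1"
  shows "(n = 1 \<or> n \<ge> 5 \<longrightarrow> real_neighbours (E_set n) = {-2 .. 2})
       \<and> (n \<in> {2,3,4} \<longrightarrow> real_neighbours (E_set n) = {-3 .. 3})
       \<and> real_neighbours (T_set n) = {-1 .. 1}"
  using real_neighbours_E_set real_neighbours_E_set_2_3_4 real_neighbours_T_set[OF assms] by blast

end
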